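(* Let $G$ be a discrete group, $\mathfrak g$ a finite string of elements of $G$, $\mathcal E$ a finite partition of $G$, and $\ell=|Con(\mathfrak g,\mathcal E)|$. Suppose $(B-A)X=0$ is a normal subsystem of $Eq(\mathfrak g,\mathcal E)$ consisting of $p$ equations (so $A,B$ are $p\times\ell$ $(0,1)$-matrices with rows $A_t,B_t$), and suppose that $\sum_{t=1}^p(B_t-A_t)=(1,1,\dots,1)$, i.e. $\alpha_C=1$ for every configuration $C$, where $(\alpha_C)_{C}=\sum_t(B_t-A_t)$. Then the Tarski number satisfies $\tau(G)\le(\ell-1)(2^p-1)$.
   Context: Configurations: for $\mathfrak g=(g_1,\dots,g_n)$ and a partition $\mathcal E=\{E_1,\dots,E_m\}$ of $G$, a configuration is $C=(c_0,\dots,c_n)\in\{1,\dots,m\}^{n+1}$ such that some $x\in G$ has $x\in E_{c_0}$ and $g_ix\in E_{c_i}$ ($1\le i\le n$); $Con(\mathfrak g,\mathcal E)$ is the set of configurations. The configuration equations $Eq(\mathfrak g,\mathcal E)$: variables $f_C$, equations $\sum_{C:\,c_j=i}f_C=\sum_{C:\,c_k=i}f_C$ for $1\le i\le m$, $0\le j,k\le n$, each written $aX=bX$ with $a,b\in\{0,1\}^\ell$ indicator vectors. A subsystem is a finite list (repetitions allowed, sides may be interchanged) of these equations $A_tX=B_tX$, written $(B-A)X=0$. Normality: with $\sum_t(B_t-A_t)$ strictly positive, $T$ the $p\times p$ lower triangular all-ones matrix, and for a permutation matrix $P$ with rows $P_1,\dots,P_p$, $P^+$ the matrix with rows $P_2,\dots,P_p,P_1$,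 the system is normal if for some permutation matrix $P$ all entries of $TP(B-A)-P^+A$ are integers $\ge-1$. Tarski number: a complete paradoxical decomposition of $G$ is a partition $\{A_1,\dots,A_r,B_1,\dots,B_s\}$ of $G$ together with $a_i,b_j\in G$ such that $\{a_iA_i\}_{i=1}^r$ and $\{b_jB_j\}_{j=1}^s$ are each partitions of $G$; $\tau(G)$ is the minimum of $r+s$ over all such decompositions ($\infty$ if none exists). *)

theory Defs
  imports "HOL-Algebra.Group" "HOL-Algebra.Coset" "HOL-Library.Extended_Nat"
begin

definition is_partition :: "('a, 'b) monoid_scheme \<Rightarrow> 'i set \<Rightarrow> ('i \<Rightarrow> 'a set) \<Rightarrow> bool" where
  "is_partition G I F \<longleftrightarrow>
     (\<forall>i\<in>I. F i \<noteq> {} \<and> F i \<subseteq> carrier G) \<and>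
     (\<forall>i\<in>I. \<forall>j\<in>I. i \<noteq> j \<longrightarrow> F i \<inter> F j = {}) \<and>
     (\<Union>i\<in>I. F i) = carrier G"

text \<open>Configurations of the string gs = (g_1,...,g_n) w.r.t. the partition E_0,...,E_{m-1}
  (block labels are 0-based; C ! 0 plays the role of c_0).\<close>
definition configurations ::
  "('a, 'b) monoid_scheme \<Rightarrow> 'a list \<Rightarrow> nat \<Rightarrow> (nat \<Rightarrow> 'a set) \<Rightarrow> nat list set" where
  "configurations G gs m E =
     {C. length C = Suc (length gs) \<and> (\<forall>c\<in>set C. c < m) \<and>
         (\<exists>x\<in>carrier G. x \<in> E (C ! 0) \<and>
            (\<forall>i<length gs. gs ! i \<otimes>\<^bsub>G\<^esub> x \<in> E (C ! Suc i)))}"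

text \<open>A subsystem of the configuration equations is a list of triples (i,j,k), standing for
  the equation  sum_{C: c_j = i} f_C = sum_{C: c_k = i} f_C, i.e. a X = b X with
  a = indicator of {C. c_j = i} and b = indicator of {C. c_k = i}.\<close>
definition eqA :: "(nat \<times> nat \<times> nat) list \<Rightarrow> nat \<Rightarrow> nat list \<Rightarrow> int" where
  "eqA eqs t C = (case eqs ! t of (i, j, k) \<Rightarrow> if C ! j = i then 1 else 0)"

definition eqB :: "(nat \<times> nat \<times> nat) list \<Rightarrow> nat \<Rightarrow> nat list \<Rightarrow> int" where
  "eqB eqs t C = (case eqs ! t of (i, j, k) \<Rightarrow> if C ! k = i then 1 else 0)"

text \<open>A permutation matrix P is given by a bijection \<sigma> of {0..<p}: row r of P is e_{\<sigma> r},
  so row r of P M is row \<sigma> r of M. T (lower triangular all ones) gives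
  (T N)_r = sum_{s \<le> r} N_s, and P^+ has rows P_2,...,P_p,P_1, so
  (P^+ A)_r = A_{\<sigma>((r+1) mod p)}.\<close>
definition normal_system ::
  "nat \<Rightarrow> 'c set \<Rightarrow> (nat \<Rightarrow> 'c \<Rightarrow> int) \<Rightarrow> (nat \<Rightarrow> 'c \<Rightarrow> int) \<Rightarrow> bool" where
  "normal_system p Con A B \<longleftrightarrow>
     (\<forall>C\<in>Con. (\<Sum>t<p. B t C - A t C) > 0) \<and>
     (\<exists>\<sigma>. bij_betw \<sigma> {..<p} {..<p} \<and>
        (\<forall>r<p. \<forall>C\<in>Con.
           (\<Sum>s\<le>r. B (\<sigma> s) C - A (\<sigma> s) C) - A (\<sigma> (Suc r mod p)) C \<ge> -1))"

definition complete_paradoxical ::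
  "('a, 'b) monoid_scheme \<Rightarrow> nat \<Rightarrow> nat \<Rightarrow> (nat \<Rightarrow> 'a set) \<Rightarrow> (nat \<Rightarrow> 'a)
     \<Rightarrow> (nat \<Rightarrow> 'a set) \<Rightarrow> (nat \<Rightarrow> 'a) \<Rightarrow> bool" where
  "complete_paradoxical G r s A a B b \<longleftrightarrow>
     a ` {..<r} \<subseteq> carrier G \<and> b ` {..<s} \<subseteq> carrier G \<and>
     is_partition G (Inl ` {..<r} \<union> Inr ` {..<s}) (case_sum A B) \<and>
     is_partition G {..<r} (\<lambda>i. a i <#\<^bsub>G\<^esub> A i) \<and>
     is_partition G {..<s} (\<lambda>j. b j <#\<^bsub>G\<^esub> B j)"

definition tarski_number :: "('a, 'b) monoid_scheme \<Rightarrow> enat" where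
  "tarski_number G =
     Inf {enat (r + s) | r s. \<exists>A a B b. complete_paradoxical G r s A a B b}"

end

theory Submission
  imports Defs
begin

text \<open>Every x \<in> G starts with one token. The equations of the normal system are processed in the
  order \<sigma> provided by normality; the equation (i, j, k) is realised by the translation
  h = g_k^-1 g_j, which carries {x. g_j x \<in> E_i} onto {x. g_k x \<in> E_i}, and in this step the top
  token on every x of the first set slides onto the top of the stack on h x. After r steps the stack
  on x has height 1 + \<Sum>s<r. (B - A)_(\<sigma> s) evaluated at the configuration of x: normality says
  exactly that a token is there whenever one has to leave, and \<alpha> = 1 makes every stack end with two
  tokens. Sliding is a bijection on tokens, so labelling x by the set of steps that moved its token
  and by the token's final level yields a complete paradoxical decomposition, the translate of a
  piece being the product of the translations along its route. There are at most 2(2^p - 1) labels,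
  because a token that never moves stays at level 0 and one moved in the last step lands at level 1.
  Finally \<alpha> = 1 forces \<ell> \<ge> 3: both sides of an equation are nonempty sets of configurations, and
  each is all of Con iff E_i = G, so with at most two configurations they have the same size and
  \<Sum>C. \<alpha>_C = 0.\<close>

lemma is_partition_fibres:
  assumes "f ` carrier G = I"
  shows "is_partition G I (\<lambda>i. {x \<in> carrier G. f x = i})"
  using assms unfolding is_partition_def by blast

lemma is_partition_reindex:
  assumes "bij_betw e J I" and "is_partition G I F" and "\<And>j. j \<in> J \<Longrightarrow> F' j = F (e j)"
  shows "is_partition G J F'"
  unfolding is_partition_def
proof (intro conjI ballI impI)
  have e: "e j \<in> I" if "j \<in> J" for j using assms(1) that by (rule bij_betw_apply)
  fix j assume j: "j \<in> J"
  then show "F' j \<noteq> {}" "F' j \<subseteq> carrier G"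
    using e assms(2,3) unfolding is_partition_def by auto
  fix j' assume "j' \<in> J" "j \<noteq> j'"
  then have "e j \<noteq> e j'" using j assms(1) unfolding bij_betw_def inj_on_def by blast
  then show "F' j \<inter> F' j' = {}"
    using e j \<open>j' \<in> J\<close> assms(2,3) unfolding is_partition_def by auto
next
  have "(\<Union>j\<in>J. F' j) = (\<Union>i\<in>e ` J. F i)" using assms(3) by simp
  then show "(\<Union>j\<in>J. F' j) = carrier G"
    using assms(1,2) unfolding is_partition_def bij_betw_def by simp
qed

lemma (in group) l_coset_preimage:
  assumes "a \<in> carrier G" and "b \<in> carrier G"
  shows "(inv b \<otimes> a) <# {x \<in> carrier G. a \<otimes> x \<in> S} = {y \<in> carrier G. b \<otimes> y \<in> S}"
proof
  show "(inv b \<otimes> a) <# {x \<in> carrier G. a \<otimes> x \<in> S} \<subseteq> {y \<in> carrier G. b \<otimes> y \<in> S}"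
    using assms by (auto simp: l_coset_def m_assoc[symmetric])
  show "{y \<in> carrier G. b \<otimes> y \<in> S} \<subseteq> (inv b \<otimes> a) <# {x \<in> carrier G. a \<otimes> x \<in> S}"
  proof
    fix y assume y: "y \<in> {y \<in> carrier G. b \<otimes> y \<in> S}"
    define x where "x = inv a \<otimes> b \<otimes> y"
    have x: "x \<in> carrier G" "a \<otimes> x = b \<otimes> y"
      using y assms by (simp_all add: x_def m_assoc[symmetric])
    have "(inv b \<otimes> a) \<otimes> x = inv b \<otimes> (b \<otimes> y)"
      using x assms by (simp add: m_assoc)
    also have "\<dots> = y"
      using y assms by (simp add: m_assoc[symmetric])
    finally show "y \<in> (inv b \<otimes> a) <# {x \<in> carrier G. a \<otimes> x \<in> S}"
      using x y unfolding l_coset_def by force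
  qed
qed

locale labelled_doubling = group G for G (structure) +
  fixes lab :: "'a \<Rightarrow> 'l" and tr :: "'l \<Rightarrow> 'a" and side :: "'l \<Rightarrow> bool"
  assumes finite_labels: "finite (lab ` carrier G)"
    and tr_closed: "x \<in> carrier G \<Longrightarrow> tr (lab x) \<in> carrier G"
    and doubling: "bij_betw (\<lambda>x. (tr (lab x) \<otimes> x, side (lab x))) (carrier G) (carrier G \<times> UNIV)"
begin

definition fibre :: "'l \<Rightarrow> 'a set" where
  "fibre l = {x \<in> carrier G. lab x = l}"

definition side_labels :: "bool \<Rightarrow> 'l set" where
  "side_labels e = {l \<in> lab ` carrier G. side l = e}"

definition undouble :: "'a \<times> bool \<Rightarrow> 'a" where
  "undouble = inv_into (carrier G) (\<lambda>x. (tr (lab x) \<otimes> x, side (lab x)))"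

lemma undouble_doubled: "x \<in> carrier G \<Longrightarrow> undouble (tr (lab x) \<otimes> x, side (lab x)) = x"
  unfolding undouble_def using bij_betw_inv_into_left[OF doubling] by simp

lemma doubled_undouble:
  assumes "y \<in> carrier G"
  shows "undouble (y, e) \<in> carrier G" and "tr (lab (undouble (y, e))) \<otimes> undouble (y, e) = y"
    and "side (lab (undouble (y, e))) = e"
proof -
  have ye: "(y, e) \<in> carrier G \<times> UNIV" using assms by simp
  show "undouble (y, e) \<in> carrier G"
    unfolding undouble_def using bij_betw_apply[OF bij_betw_inv_into[OF doubling] ye] .
  show "tr (lab (undouble (y, e))) \<otimes> undouble (y, e) = y" "side (lab (undouble (y, e))) = e"
    unfolding undouble_def using bij_betw_inv_into_right[OF doubling ye] by simp_all
qed

lemma translate_fibre: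
  assumes "l \<in> lab ` carrier G"
  shows "tr l <# fibre l = {y \<in> carrier G. lab (undouble (y, side l)) = l}"
proof
  show "tr l <# fibre l \<subseteq> {y \<in> carrier G. lab (undouble (y, side l)) = l}"
  proof
    fix y assume "y \<in> tr l <# fibre l"
    then obtain x where x: "x \<in> carrier G" "lab x = l" "y = tr l \<otimes> x"
      unfolding l_coset_def fibre_def by blast
    then show "y \<in> {y \<in> carrier G. lab (undouble (y, side l)) = l}"
      using tr_closed[OF x(1)] undouble_doubled[OF x(1)] by auto
  qed
  show "{y \<in> carrier G. lab (undouble (y, side l)) = l} \<subseteq> tr l <# fibre l"
  proof
    fix y assume "y \<in> {y \<in> carrier G. lab (undouble (y, side l)) = l}"
    then show "y \<in> tr l <# fibre l"
      using doubled_undouble[of y "side l"] unfolding l_coset_def fibre_def by force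
  qed
qed

lemma undoubled_labels: "(\<lambda>y. lab (undouble (y, e))) ` carrier G = side_labels e"
proof
  show "(\<lambda>y. lab (undouble (y, e))) ` carrier G \<subseteq> side_labels e"
  proof
    fix l assume "l \<in> (\<lambda>y. lab (undouble (y, e))) ` carrier G"
    then obtain y where "y \<in> carrier G" "l = lab (undouble (y, e))" by blast
    with doubled_undouble(1,3)[of y e] show "l \<in> side_labels e"
      unfolding side_labels_def by blast
  qed
  show "side_labels e \<subseteq> (\<lambda>y. lab (undouble (y, e))) ` carrier G"
  proof
    fix l assume "l \<in> side_labels e"
    then obtain x where x: "x \<in> carrier G" "l = lab x" "side l = e"
      unfolding side_labels_def by blast
    then have "l = lab (undouble (tr (lab x) \<otimes> x, e))"
      using undouble_doubled[OF x(1)] by simp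
    then show "l \<in> (\<lambda>y. lab (undouble (y, e))) ` carrier G"
      using x(1) tr_closed by blast
  qed
qed

lemma is_partition_translates:
  assumes "bij_betw f {..<n} (side_labels e)"
  shows "is_partition G {..<n} (\<lambda>i. tr (f i) <# fibre (f i))"
proof (rule is_partition_reindex[OF assms is_partition_fibres[OF undoubled_labels]])
  fix i assume "i \<in> {..<n}"
  then have "f i \<in> side_labels e" using bij_betw_apply[OF assms] by blast
  then show "tr (f i) <# fibre (f i) = {y \<in> carrier G. lab (undouble (y, e)) = f i}"
    using translate_fibre unfolding side_labels_def by auto
qed

lemma side_labels_split:
  "lab ` carrier G = side_labels False \<union> side_labels True"
  "side_labels False \<inter> side_labels True = {}"
  unfolding side_labels_def by auto

lemma is_partition_pieces:
  assumes fa: "bij_betw fa {..<r} (side_labels False)" and fb: "bij_betw fb {..<s} (side_labels True)"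
  shows "is_partition G (Inl ` {..<r} \<union> Inr ` {..<s}) (case_sum (fibre \<circ> fa) (fibre \<circ> fb))"
proof -
  have "side (fa i) = False" "side (fb j) = True" if "i < r" "j < s" for i j
    using bij_betw_apply[OF fa] bij_betw_apply[OF fb] that unfolding side_labels_def by auto
  then have disj: "fa i \<noteq> fb j" "fb j \<noteq> fa i" if "i < r" "j < s" for i j
    using that by (metis (full_types))+
  have "inj_on (case_sum fa fb) (Inl ` {..<r} \<union> Inr ` {..<s})"
  proof (rule inj_onI)
    fix u v assume "u \<in> Inl ` {..<r} \<union> Inr ` {..<s}" "v \<in> Inl ` {..<r} \<union> Inr ` {..<s}"
      and "case_sum fa fb u = case_sum fa fb v"
    then show "u = v"
      using bij_betw_imp_inj_on[OF fa] bij_betw_imp_inj_on[OF fb]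
      by (elim UnE imageE) (simp_all add: disj inj_on_eq_iff)
  qed
  moreover have "case_sum fa fb ` (Inl ` {..<r} \<union> Inr ` {..<s}) = lab ` carrier G"
    using bij_betw_imp_surj_on[OF fa] bij_betw_imp_surj_on[OF fb] side_labels_split(1)
    by (simp add: image_Un image_image)
  ultimately have bij: "bij_betw (case_sum fa fb) (Inl ` {..<r} \<union> Inr ` {..<s}) (lab ` carrier G)"
    unfolding bij_betw_def ..
  have part: "is_partition G (lab ` carrier G) fibre"
    using is_partition_fibres[OF refl] unfolding fibre_def .
  show ?thesis
    by (rule is_partition_reindex[OF bij part]) (auto split: sum.split)
qed

theorem tarski_number_le_card_labels: "tarski_number G \<le> enat (card (lab ` carrier G))"
proof -
  have fin: "finite (side_labels e)" for e
    using finite_labels unfolding side_labels_def by simp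
  obtain fa where fa: "bij_betw fa {..<card (side_labels False)} (side_labels False)"
    using ex_bij_betw_nat_finite[OF fin] by (auto simp: atLeast0LessThan)
  obtain fb where fb: "bij_betw fb {..<card (side_labels True)} (side_labels True)"
    using ex_bij_betw_nat_finite[OF fin] by (auto simp: atLeast0LessThan)
  have tr_labels: "tr ` side_labels e \<subseteq> carrier G" for e
    using tr_closed unfolding side_labels_def by blast
  have "(tr \<circ> fa) ` {..<card (side_labels False)} \<subseteq> carrier G"
    "(tr \<circ> fb) ` {..<card (side_labels True)} \<subseteq> carrier G"
    unfolding image_comp[symmetric] bij_betw_imp_surj_on[OF fa] bij_betw_imp_surj_on[OF fb]
    by (rule tr_labels)+
  then have "complete_paradoxical G (card (side_labels False)) (card (side_labels True))
          (fibre \<circ> fa) (tr \<circ> fa) (fibre \<circ> fb) (tr \<circ> fb)"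
    unfolding complete_paradoxical_def
    using is_partition_pieces[OF fa fb] is_partition_translates[OF fa] is_partition_translates[OF fb]
    by (simp add: comp_def)
  then have "tarski_number G \<le> enat (card (side_labels False) + card (side_labels True))"
    unfolding tarski_number_def by (intro Inf_lower) blast
  also have "card (side_labels False) + card (side_labels True) = card (lab ` carrier G)"
    using card_Un_disjoint[OF fin fin side_labels_split(2)] side_labels_split(1) by simp
  finally show ?thesis .
qed

end

text \<open>W r x is the height of the stack on x after r steps; a token is a pair (position, level).\<close>

locale token_sliding = group G for G (structure) +
  fixes p :: nat and X Y :: "nat \<Rightarrow> 'a set" and h :: "nat \<Rightarrow> 'a" and W :: "nat \<Rightarrow> 'a \<Rightarrow> int"
  assumes X_carrier: "r < p \<Longrightarrow> X r \<subseteq> carrier G"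
    and h_closed: "r < p \<Longrightarrow> h r \<in> carrier G"
    and translate_X: "r < p \<Longrightarrow> h r <# X r = Y r"
    and W_0: "x \<in> carrier G \<Longrightarrow> W 0 x = 1"
    and W_Suc: "r < p \<Longrightarrow> x \<in> carrier G \<Longrightarrow>
      W (Suc r) x = W r x - of_bool (x \<in> X r) + of_bool (x \<in> Y r)"
    and W_pos_on_X: "r < p \<Longrightarrow> x \<in> X r \<Longrightarrow> 1 \<le> W r x"
    and W_final: "x \<in> carrier G \<Longrightarrow> W p x = 2"
begin

lemma translate_mem_Y: "r < p \<Longrightarrow> x \<in> X r \<Longrightarrow> h r \<otimes> x \<in> Y r"
  using translate_X unfolding l_coset_def by blast

lemma Y_memE:
  assumes "r < p" and "y \<in> Y r"
  obtains x where "x \<in> X r" and "y = h r \<otimes> x" and "inv (h r) \<otimes> y = x"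
proof -
  obtain x where x: "x \<in> X r" "y = h r \<otimes> x"
    using assms translate_X unfolding l_coset_def by blast
  moreover have "inv (h r) \<otimes> y = x"
    using x X_carrier[OF assms(1)] h_closed[OF assms(1)] by (auto simp: m_assoc[symmetric])
  ultimately show thesis by (rule that)
qed

lemma Y_carrier: "r < p \<Longrightarrow> Y r \<subseteq> carrier G"
  using X_carrier h_closed translate_X l_coset_subset_G by metis

lemma W_nonneg: "r \<le> p \<Longrightarrow> x \<in> carrier G \<Longrightarrow> 0 \<le> W r x"
proof (induction r)
  case 0
  then show ?case using W_0 by simp
next
  case (Suc r)
  then have "0 \<le> W r x" "x \<in> X r \<Longrightarrow> 1 \<le> W r x" using W_pos_on_X by simp_all
  then show ?case using W_Suc[of r x] Suc.prems by (cases "x \<in> X r") simp_all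
qed

lemma steps_pos: "0 < p"
proof (rule ccontr)
  assume "\<not> 0 < p"
  then show False using W_0[of \<one>] W_final[of \<one>] by simp
qed

definition stacks :: "nat \<Rightarrow> ('a \<times> int) set" where
  "stacks r = {(y, l). y \<in> carrier G \<and> 0 \<le> l \<and> l < W r y}"

definition slide :: "nat \<Rightarrow> 'a \<times> int \<Rightarrow> 'a \<times> int" where
  "slide r = (\<lambda>(y, l). if y \<in> X r \<and> l = W r y - 1
     then (h r \<otimes> y, W (Suc r) (h r \<otimes> y) - 1) else (y, l))"

definition unslide :: "nat \<Rightarrow> 'a \<times> int \<Rightarrow> 'a \<times> int" where
  "unslide r = (\<lambda>(z, l). if z \<in> Y r \<and> l = W (Suc r) z - 1
     then (inv (h r) \<otimes> z, W r (inv (h r) \<otimes> z) - 1) else (z, l))"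

lemma untouched_tokens:
  assumes "r < p" and "y \<in> carrier G"
  shows "(0 \<le> l \<and> l < W r y \<and> \<not> (y \<in> X r \<and> l = W r y - 1)) \<longleftrightarrow>
    (0 \<le> l \<and> l < W (Suc r) y \<and> \<not> (y \<in> Y r \<and> l = W (Suc r) y - 1))"
  using W_Suc[OF assms] by (cases "y \<in> X r"; cases "y \<in> Y r") auto

lemma W_Suc_translate_pos:
  assumes r: "r < p" and x: "x \<in> X r"
  shows "1 \<le> W (Suc r) (h r \<otimes> x)"
proof -
  have z: "h r \<otimes> x \<in> Y r" "h r \<otimes> x \<in> carrier G"
    using translate_mem_Y[OF r x] Y_carrier[OF r] by auto
  have "of_bool (h r \<otimes> x \<in> X r) \<le> W r (h r \<otimes> x)"
    using W_pos_on_X[OF r] W_nonneg[of r "h r \<otimes> x"] r z(2) by (cases "h r \<otimes> x \<in> X r") simp_all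
  then show ?thesis using W_Suc[OF r z(2)] z(1) by simp
qed

lemma slide_moved:
  "y \<in> X r \<Longrightarrow> l = W r y - 1 \<Longrightarrow> slide r (y, l) = (h r \<otimes> y, W (Suc r) (h r \<otimes> y) - 1)"
  unfolding slide_def by simp

lemma slide_unmoved: "\<not> (y \<in> X r \<and> l = W r y - 1) \<Longrightarrow> slide r (y, l) = (y, l)"
  unfolding slide_def by auto

lemma unslide_moved:
  "z \<in> Y r \<Longrightarrow> l = W (Suc r) z - 1 \<Longrightarrow> unslide r (z, l) = (inv (h r) \<otimes> z, W r (inv (h r) \<otimes> z) - 1)"
  unfolding unslide_def by simp

lemma unslide_unmoved: "\<not> (z \<in> Y r \<and> l = W (Suc r) z - 1) \<Longrightarrow> unslide r (z, l) = (z, l)"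
  unfolding unslide_def by auto

lemma slide_stacks:
  assumes r: "r < p" and c: "c \<in> stacks r"
  shows "slide r c \<in> stacks (Suc r)"
proof -
  obtain y l where yl: "c = (y, l)" "y \<in> carrier G" "0 \<le> l" "l < W r y"
    using c unfolding stacks_def by blast
  show ?thesis
  proof (cases "y \<in> X r \<and> l = W r y - 1")
    case True
    then have "h r \<otimes> y \<in> carrier G" "1 \<le> W (Suc r) (h r \<otimes> y)"
      using W_Suc_translate_pos[OF r] translate_mem_Y[OF r] Y_carrier[OF r] by auto
    then show ?thesis
      using True yl(1) slide_moved unfolding stacks_def by simp
  next
    case False
    then show ?thesis
      using yl untouched_tokens[OF r yl(2), of l] slide_unmoved unfolding stacks_def by simp
  qed
qed

lemma unslide_stacks:
  assumes r: "r < p" and c: "c \<in> stacks (Suc r)"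
  shows "unslide r c \<in> stacks r"
proof -
  obtain z l where zl: "c = (z, l)" "z \<in> carrier G" "0 \<le> l" "l < W (Suc r) z"
    using c unfolding stacks_def by blast
  show ?thesis
  proof (cases "z \<in> Y r \<and> l = W (Suc r) z - 1")
    case True
    then obtain x where x: "x \<in> X r" "inv (h r) \<otimes> z = x"
      using Y_memE[OF r] by metis
    then have "x \<in> carrier G" "1 \<le> W r x"
      using W_pos_on_X[OF r] X_carrier[OF r] by auto
    then show ?thesis
      using True x zl(1) unslide_moved unfolding stacks_def by simp
  next
    case False
    then show ?thesis
      using zl untouched_tokens[OF r zl(2), of l] unslide_unmoved unfolding stacks_def by simp
  qed
qed

lemma unslide_slide:
  assumes r: "r < p" and c: "c \<in> stacks r"
  shows "unslide r (slide r c) = c"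
proof -
  obtain y l where yl: "c = (y, l)" "y \<in> carrier G" "0 \<le> l" "l < W r y"
    using c unfolding stacks_def by blast
  show ?thesis
  proof (cases "y \<in> X r \<and> l = W r y - 1")
    case True
    have "inv (h r) \<otimes> (h r \<otimes> y) = y"
      using h_closed[OF r] yl(2) by (simp add: m_assoc[symmetric])
    then show ?thesis
      using True yl(1) translate_mem_Y[OF r] slide_moved unslide_moved by simp
  next
    case False
    then show ?thesis
      using yl untouched_tokens[OF r yl(2), of l] slide_unmoved unslide_unmoved by simp
  qed
qed

lemma slide_unslide:
  assumes r: "r < p" and c: "c \<in> stacks (Suc r)"
  shows "slide r (unslide r c) = c"
proof -
  obtain z l where zl: "c = (z, l)" "z \<in> carrier G" "0 \<le> l" "l < W (Suc r) z"
    using c unfolding stacks_def by blast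
  show ?thesis
  proof (cases "z \<in> Y r \<and> l = W (Suc r) z - 1")
    case True
    then obtain x where "x \<in> X r" "z = h r \<otimes> x" "inv (h r) \<otimes> z = x"
      using Y_memE[OF r] by metis
    then show ?thesis
      using True zl(1) slide_moved unslide_moved by simp
  next
    case False
    then show ?thesis
      using zl untouched_tokens[OF r zl(2), of l] slide_unmoved unslide_unmoved by simp
  qed
qed

lemma bij_betw_slide: "r < p \<Longrightarrow> bij_betw (slide r) (stacks r) (stacks (Suc r))"
  by (rule bij_betwI[where g = "unslide r"])
    (simp_all add: slide_stacks unslide_stacks unslide_slide slide_unslide)

primrec track :: "nat \<Rightarrow> 'a \<Rightarrow> 'a \<times> int" where
  "track 0 x = (x, 0)"
| "track (Suc r) x = slide r (track r x)"

lemma bij_betw_track: "r \<le> p \<Longrightarrow> bij_betw (track r) (carrier G) (stacks r)"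
proof (induction r)
  case 0
  have "bij_betw (\<lambda>x. (x, 0::int)) (carrier G) (stacks 0)"
    using W_0 unfolding stacks_def by (intro bij_betwI[where g = fst]) auto
  then show ?case by simp
next
  case (Suc r)
  then have "bij_betw (slide r \<circ> track r) (carrier G) (stacks (Suc r))"
    using bij_betw_trans[OF Suc.IH bij_betw_slide] by simp
  then show ?case by (simp add: comp_def)
qed

definition moved :: "nat \<Rightarrow> 'a \<Rightarrow> bool" where
  "moved r x \<longleftrightarrow> fst (track r x) \<in> X r \<and> snd (track r x) = W r (fst (track r x)) - 1"

definition route :: "nat \<Rightarrow> 'a \<Rightarrow> nat set" where
  "route r x = {s. s < r \<and> moved s x}"

primrec route_translation :: "nat \<Rightarrow> nat set \<Rightarrow> 'a" where
  "route_translation 0 S = \<one>"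
| "route_translation (Suc r) S = (if r \<in> S then h r \<otimes> route_translation r S else route_translation r S)"

lemma track_Suc_moved:
  "moved r x \<Longrightarrow> track (Suc r) x = (h r \<otimes> fst (track r x), W (Suc r) (h r \<otimes> fst (track r x)) - 1)"
  unfolding moved_def by (cases "track r x") (simp add: slide_moved)

lemma track_Suc_unmoved: "\<not> moved r x \<Longrightarrow> track (Suc r) x = track r x"
  unfolding moved_def by (cases "track r x") (simp add: slide_unmoved)

declare track.simps(2) [simp del]

lemma route_Suc: "route (Suc r) x = (if moved r x then insert r (route r x) else route r x)"
  unfolding route_def by (auto simp: less_Suc_eq)

lemma route_translation_closed: "r \<le> p \<Longrightarrow> route_translation r S \<in> carrier G"
  by (induction r) (simp_all add: h_closed Suc_le_eq)

lemma route_translation_cong: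
  "(\<And>s. s < r \<Longrightarrow> s \<in> S \<longleftrightarrow> s \<in> S') \<Longrightarrow> route_translation r S = route_translation r S'"
  by (induction r) auto

lemma fst_track:
  assumes "r \<le> p" and x: "x \<in> carrier G"
  shows "fst (track r x) = route_translation r (route r x) \<otimes> x"
  using assms(1)
proof (induction r)
  case 0
  then show ?case using x by (simp add: route_def)
next
  case (Suc r)
  have "route_translation r (route (Suc r) x) = route_translation r (route r x)"
    by (rule route_translation_cong) (simp add: route_def)
  moreover have "r \<notin> route r x" by (simp add: route_def)
  moreover have "route_translation r (route r x) \<in> carrier G" "h r \<in> carrier G"
    using Suc.prems route_translation_closed h_closed by simp_all
  ultimately show ?case
    using Suc x
    by (cases "moved r x") (simp_all add: track_Suc_moved track_Suc_unmoved route_Suc m_assoc)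
qed

lemma snd_track_unmoved: "route r x = {} \<Longrightarrow> snd (track r x) = 0"
  by (induction r) (simp_all add: route_Suc track_Suc_unmoved split: if_splits)

lemma snd_track_last_moved:
  assumes "p - 1 \<in> route p x"
  shows "snd (track p x) = 1"
proof -
  obtain q where q: "p = Suc q" using steps_pos not0_implies_Suc by blast
  then have "moved q x" using assms unfolding route_def by simp
  moreover from this have "h q \<otimes> fst (track q x) \<in> carrier G"
    using translate_mem_Y Y_carrier q unfolding moved_def by blast
  ultimately show ?thesis using W_final q by (simp add: track_Suc_moved)
qed

definition route_label :: "'a \<Rightarrow> nat set \<times> bool" where
  "route_label x = (route p x, snd (track p x) = 1)"

lemma bij_betw_final_level:
  "bij_betw (\<lambda>(y, l). (y, l = (1::int))) (stacks p) (carrier G \<times> UNIV)"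
  by (rule bij_betwI[where g = "\<lambda>(y, e). (y, of_bool e)"]) (auto simp: stacks_def W_final)

sublocale labelled_doubling G route_label "\<lambda>(S, e). route_translation p S" snd
proof
  show "finite (route_label ` carrier G)"
    by (rule finite_subset[of _ "Pow {..<p} \<times> UNIV"]) (auto simp: route_label_def route_def)
  show "(case route_label x of (S, e) \<Rightarrow> route_translation p S) \<in> carrier G" for x
    using route_translation_closed by (simp add: route_label_def)
  have "bij_betw ((\<lambda>(y, l). (y, l = (1::int))) \<circ> track p) (carrier G) (carrier G \<times> UNIV)"
    using bij_betw_trans[OF bij_betw_track[OF order_refl] bij_betw_final_level] .
  moreover have "((\<lambda>(y, l). (y, l = (1::int))) \<circ> track p) x =
      ((case route_label x of (S, e) \<Rightarrow> route_translation p S) \<otimes> x, snd (route_label x))"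
    if "x \<in> carrier G" for x
    using fst_track[OF order_refl that] by (cases "track p x") (simp add: route_label_def)
  ultimately show "bij_betw (\<lambda>x. ((case route_label x of (S, e) \<Rightarrow> route_translation p S) \<otimes> x,
      snd (route_label x))) (carrier G) (carrier G \<times> UNIV)"
    by (simp cong: bij_betw_cong)
qed

lemma route_labels_subset:
  "route_label ` carrier G \<subseteq> Pow {..<p} \<times> UNIV - {({}, True), ({p - 1}, False)}"
proof
  fix c assume "c \<in> route_label ` carrier G"
  then obtain x where x: "x \<in> carrier G" "c = route_label x" by blast
  have "track p x \<in> stacks p" using bij_betw_apply[OF bij_betw_track[OF order_refl] x(1)] .
  then have "snd (track p x) = 0 \<or> snd (track p x) = 1"
    using W_final unfolding stacks_def by (cases "track p x") auto
  then show "c \<in> Pow {..<p} \<times> UNIV - {({}, True), ({p - 1}, False)}"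
    using x snd_track_unmoved[of p x] snd_track_last_moved[of x]
    unfolding route_label_def route_def by auto
qed

lemma card_admissible_labels:
  "card (Pow {..<p} \<times> (UNIV :: bool set) - {({}, True), ({p - 1}, False)}) = 2 * (2 ^ p - 1)"
proof -
  have "{({}, True), ({p - 1}, False)} \<subseteq> Pow {..<p} \<times> (UNIV :: bool set)"
    using steps_pos by auto
  then show ?thesis
    by (simp add: card_Diff_subset card_cartesian_product card_Pow)
qed

theorem tarski_number_le_steps: "tarski_number G \<le> enat (2 * (2 ^ p - 1))"
proof -
  have "card (route_label ` carrier G) \<le> 2 * (2 ^ p - 1)"
    using card_mono[OF _ route_labels_subset] card_admissible_labels by simp
  then show ?thesis using tarski_number_le_card_labels order_trans by fastforce
qed

end

locale partitioned_group = group G for G (structure) +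
  fixes gs :: "'a list" and m :: nat and E :: "nat \<Rightarrow> 'a set"
  assumes gs_carrier: "set gs \<subseteq> carrier G" and partition: "is_partition G {..<m} E"
begin

definition gen :: "nat \<Rightarrow> 'a" where
  "gen j = (if j = 0 then \<one> else gs ! (j - 1))"

definition block :: "'a \<Rightarrow> nat" where
  "block y = (THE i. i < m \<and> y \<in> E i)"

definition conf :: "'a \<Rightarrow> nat list" where
  "conf x = map (\<lambda>j. block (gen j \<otimes> x)) [0..<Suc (length gs)]"

lemma gen_closed: "j \<le> length gs \<Longrightarrow> gen j \<in> carrier G"
  unfolding gen_def using gs_carrier by (auto intro!: nth_mem[THEN subsetD[OF gs_carrier]])

lemma ex1_block: "y \<in> carrier G \<Longrightarrow> \<exists>!i. i < m \<and> y \<in> E i"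
  using partition unfolding is_partition_def by blast

lemma block: "y \<in> carrier G \<Longrightarrow> block y < m \<and> y \<in> E (block y)"
  unfolding block_def by (rule theI'[OF ex1_block])

lemma block_eq_iff: "y \<in> carrier G \<Longrightarrow> i < m \<Longrightarrow> block y = i \<longleftrightarrow> y \<in> E i"
  using block ex1_block by blast

lemma conf_nth: "j \<le> length gs \<Longrightarrow> conf x ! j = block (gen j \<otimes> x)"
  unfolding conf_def by (simp del: upt_Suc add: nth_map_upt)

lemma conf_nth_eq_iff:
  "j \<le> length gs \<Longrightarrow> x \<in> carrier G \<Longrightarrow> i < m \<Longrightarrow> conf x ! j = i \<longleftrightarrow> gen j \<otimes> x \<in> E i"
  using conf_nth block_eq_iff gen_closed by simp

lemma configurations_eq_image: "configurations G gs m E = conf ` carrier G"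
proof
  show "conf ` carrier G \<subseteq> configurations G gs m E"
  proof
    fix C assume "C \<in> conf ` carrier G"
    then obtain x where x: "x \<in> carrier G" "C = conf x" by blast
    have "c < m" if "c \<in> set C" for c
      using that x block gen_closed unfolding conf_def by auto
    moreover have E: "gen j \<otimes> x \<in> E (C ! j)" if "j \<le> length gs" for j
      using that x block gen_closed conf_nth by simp
    from E[of 0] have "x \<in> E (C ! 0)" using x(1) by (simp add: gen_def)
    moreover have "gs ! i \<otimes> x \<in> E (C ! Suc i)" if "i < length gs" for i
      using E[of "Suc i"] that by (simp add: gen_def)
    ultimately show "C \<in> configurations G gs m E"
      using x unfolding configurations_def by (auto simp: conf_def)
  qed
  show "configurations G gs m E \<subseteq> conf ` carrier G"
  proof
    fix C assume "C \<in> configurations G gs m E"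
    then obtain x where len: "length C = Suc (length gs)" and lt: "\<forall>c\<in>set C. c < m"
      and x: "x \<in> carrier G" "x \<in> E (C ! 0)" "\<forall>i<length gs. gs ! i \<otimes> x \<in> E (C ! Suc i)"
      unfolding configurations_def by auto
    have "C = conf x"
    proof (rule nth_equalityI)
      show "length C = length (conf x)" using len by (simp add: conf_def)
      fix j assume "j < length C"
      then have j: "j \<le> length gs" and "C ! j < m" using len lt by auto
      moreover have "gen j \<otimes> x \<in> E (C ! j)"
        using x j by (cases j) (simp_all add: gen_def)
      ultimately show "C ! j = conf x ! j" using conf_nth_eq_iff[OF j x(1)] by metis
    qed
    then show "C \<in> conf ` carrier G" using x(1) by blast
  qed
qed

lemma finite_configurations: "finite (configurations G gs m E)"
proof (rule finite_subset)
  show "configurations G gs m E \<subseteq> {C. set C \<subseteq> {..<m} \<and> length C = Suc (length gs)}"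
    unfolding configurations_def by auto
qed (rule finite_lists_length_eq[OF finite_lessThan])

lemma ex_configuration_nth:
  assumes "j \<le> length gs" and "i < m"
  shows "\<exists>C\<in>configurations G gs m E. C ! j = i"
proof -
  obtain y where y: "y \<in> E i" "y \<in> carrier G"
    using partition assms(2) unfolding is_partition_def by blast
  have "gen j \<otimes> (inv (gen j) \<otimes> y) \<in> E i"
    using y gen_closed[OF assms(1)] by (simp add: m_assoc[symmetric])
  then have "conf (inv (gen j) \<otimes> y) ! j = i"
    using conf_nth_eq_iff assms y(2) gen_closed by simp
  then show ?thesis
    using configurations_eq_image y(2) gen_closed[OF assms(1)] by blast
qed

lemma all_configurations_nth_iff:
  assumes "j \<le> length gs" and "i < m"
  shows "(\<forall>C\<in>configurations G gs m E. C ! j = i) \<longleftrightarrow> E i = carrier G"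
proof
  assume all: "\<forall>C\<in>configurations G gs m E. C ! j = i"
  have "y \<in> E i" if y: "y \<in> carrier G" for y
  proof -
    have "conf (inv (gen j) \<otimes> y) ! j = i"
      using all configurations_eq_image y gen_closed[OF assms(1)] by blast
    then have "gen j \<otimes> (inv (gen j) \<otimes> y) \<in> E i"
      using conf_nth_eq_iff assms y gen_closed by simp
    then show "y \<in> E i"
      using y gen_closed[OF assms(1)] by (simp add: m_assoc[symmetric])
  qed
  then show "E i = carrier G"
    using partition assms(2) unfolding is_partition_def by blast
next
  assume "E i = carrier G"
  then show "\<forall>C\<in>configurations G gs m E. C ! j = i"
    using conf_nth_eq_iff assms gen_closed configurations_eq_image by auto
qed

end

lemma card_eq_of_card_le_two:
  assumes "finite U" and "card U \<le> 2" and "K \<subseteq> U" and "L \<subseteq> U"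
    and "K \<noteq> {}" and "L \<noteq> {}" and "K = U \<longleftrightarrow> L = U"
  shows "card K = card L"
proof (cases "K = U")
  case False
  then have "0 < card K" "card K < card U" "0 < card L" "card L < card U"
    using assms by (auto intro!: psubset_card_mono simp: card_gt_0_iff intro: finite_subset)
  then show ?thesis using assms(2) by linarith
qed (use assms in simp)

locale configuration_system = partitioned_group +
  fixes eqs :: "(nat \<times> nat \<times> nat) list"
  assumes eqs_range: "\<forall>(i, j, k)\<in>set eqs. i < m \<and> j \<le> length gs \<and> k \<le> length gs"
begin

abbreviation Con :: "nat list set" where
  "Con \<equiv> configurations G gs m E"

definition eq_lhs :: "nat \<Rightarrow> 'a set" where
  "eq_lhs t = (case eqs ! t of (i, j, k) \<Rightarrow> {x \<in> carrier G. gen j \<otimes> x \<in> E i})"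

definition eq_rhs :: "nat \<Rightarrow> 'a set" where
  "eq_rhs t = (case eqs ! t of (i, j, k) \<Rightarrow> {x \<in> carrier G. gen k \<otimes> x \<in> E i})"

definition eq_shift :: "nat \<Rightarrow> 'a" where
  "eq_shift t = (case eqs ! t of (i, j, k) \<Rightarrow> inv (gen k) \<otimes> gen j)"

lemma eq_range:
  "t < length eqs \<Longrightarrow> eqs ! t = (i, j, k) \<Longrightarrow> i < m \<and> j \<le> length gs \<and> k \<le> length gs"
  using eqs_range nth_mem by fastforce

lemma eqA_conf: "t < length eqs \<Longrightarrow> x \<in> carrier G \<Longrightarrow> eqA eqs t (conf x) = of_bool (x \<in> eq_lhs t)"
  using eq_range conf_nth_eq_iff unfolding eqA_def eq_lhs_def by (auto split: prod.split)

lemma eqB_conf: "t < length eqs \<Longrightarrow> x \<in> carrier G \<Longrightarrow> eqB eqs t (conf x) = of_bool (x \<in> eq_rhs t)"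
  using eq_range conf_nth_eq_iff unfolding eqB_def eq_rhs_def by (auto split: prod.split)

lemma eq_shift_closed: "t < length eqs \<Longrightarrow> eq_shift t \<in> carrier G"
  using eq_range gen_closed unfolding eq_shift_def by (auto split: prod.split)

lemma eq_shift_lhs: "t < length eqs \<Longrightarrow> eq_shift t <# eq_lhs t = eq_rhs t"
  using eq_range gen_closed l_coset_preimage
  unfolding eq_shift_def eq_lhs_def eq_rhs_def by (auto split: prod.split)

theorem tarski_number_le_normal_system:
  assumes normal: "normal_system (length eqs) Con (eqA eqs) (eqB eqs)"
    and unit: "\<forall>C\<in>Con. (\<Sum>t<length eqs. eqB eqs t C - eqA eqs t C) = 1"
  shows "tarski_number G \<le> enat (2 * (2 ^ length eqs - 1))"
proof -
  let ?p = "length eqs"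
  obtain \<sigma> where \<sigma>: "bij_betw \<sigma> {..<?p} {..<?p}"
    and nc: "\<forall>r<?p. \<forall>C\<in>Con.
      (\<Sum>s\<le>r. eqB eqs (\<sigma> s) C - eqA eqs (\<sigma> s) C) - eqA eqs (\<sigma> (Suc r mod ?p)) C \<ge> -1"
    using normal unfolding normal_system_def by blast
  have \<sigma>_lt: "\<sigma> r < ?p" if "r < ?p" for r using bij_betw_apply[OF \<sigma>] that by simp
  have conf_in: "conf x \<in> Con" if "x \<in> carrier G" for x
    using configurations_eq_image that by simp
  define W where "W r x = 1 + (\<Sum>s<r. eqB eqs (\<sigma> s) (conf x) - eqA eqs (\<sigma> s) (conf x))" for r x
  interpret token_sliding G ?p "eq_lhs \<circ> \<sigma>" "eq_rhs \<circ> \<sigma>" "eq_shift \<circ> \<sigma>" W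
  proof
    fix r assume r: "r < ?p"
    show "(eq_lhs \<circ> \<sigma>) r \<subseteq> carrier G" by (simp add: eq_lhs_def split: prod.split)
    show "(eq_shift \<circ> \<sigma>) r \<in> carrier G" using eq_shift_closed \<sigma>_lt[OF r] by simp
    show "(eq_shift \<circ> \<sigma>) r <# (eq_lhs \<circ> \<sigma>) r = (eq_rhs \<circ> \<sigma>) r" using eq_shift_lhs \<sigma>_lt[OF r] by simp
    show "W (Suc r) x = W r x - of_bool (x \<in> (eq_lhs \<circ> \<sigma>) r) + of_bool (x \<in> (eq_rhs \<circ> \<sigma>) r)"
      if "x \<in> carrier G" for x
      using eqA_conf eqB_conf \<sigma>_lt[OF r] that unfolding W_def by simp
    show "1 \<le> W r x" if x: "x \<in> (eq_lhs \<circ> \<sigma>) r" for x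
    proof (cases r)
      case (Suc q)
      have xc: "x \<in> carrier G" using x by (simp add: eq_lhs_def split: prod.splits)
      have "q < ?p" "Suc q mod ?p = r" using r Suc by simp_all
      then have "(\<Sum>s\<le>q. eqB eqs (\<sigma> s) (conf x) - eqA eqs (\<sigma> s) (conf x))
          - eqA eqs (\<sigma> r) (conf x) \<ge> -1"
        using nc[rule_format, OF \<open>q < ?p\<close> conf_in[OF xc]] by simp
      moreover have "eqA eqs (\<sigma> r) (conf x) = 1"
        using eqA_conf \<sigma>_lt[OF r] x xc by simp
      ultimately show ?thesis unfolding W_def Suc by (simp add: lessThan_Suc_atMost)
    qed (simp add: W_def)
  next
    fix x assume x: "x \<in> carrier G"
    show "W 0 x = 1" by (simp add: W_def)
    have "(\<Sum>s<?p. eqB eqs (\<sigma> s) (conf x) - eqA eqs (\<sigma> s) (conf x))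
        = (\<Sum>t<?p. eqB eqs t (conf x) - eqA eqs t (conf x))"
      by (rule sum.reindex_bij_betw[OF \<sigma>])
    then show "W ?p x = 2" using unit conf_in[OF x] unfolding W_def by simp
  qed
  show ?thesis by (rule tarski_number_le_steps)
qed

lemma card_configurations_ge_3:
  assumes unit: "\<forall>C\<in>Con. (\<Sum>t<length eqs. eqB eqs t C - eqA eqs t C) = 1"
  shows "3 \<le> card Con"
proof (rule ccontr)
  assume "\<not> 3 \<le> card Con"
  then have le2: "card Con \<le> 2" by simp
  have balanced: "(\<Sum>C\<in>Con. eqA eqs t C) = (\<Sum>C\<in>Con. eqB eqs t C)" if t: "t < length eqs" for t
  proof -
    obtain i j k where ijk: "eqs ! t = (i, j, k)" by (metis prod_cases3)
    then have range: "i < m" "j \<le> length gs" "k \<le> length gs" using eq_range t by auto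
    have "{C\<in>Con. C ! j = i} = Con \<longleftrightarrow> {C\<in>Con. C ! k = i} = Con"
      using all_configurations_nth_iff[OF range(2,1)] all_configurations_nth_iff[OF range(3,1)]
      by auto
    moreover have "{C\<in>Con. C ! j = i} \<noteq> {}" "{C\<in>Con. C ! k = i} \<noteq> {}"
      using ex_configuration_nth[OF range(2,1)] ex_configuration_nth[OF range(3,1)] by auto
    ultimately have "card {C\<in>Con. C ! j = i} = card {C\<in>Con. C ! k = i}"
      by (intro card_eq_of_card_le_two[OF finite_configurations le2]) auto
    moreover have "eqA eqs t C = of_bool (C ! j = i)" "eqB eqs t C = of_bool (C ! k = i)" for C
      using ijk unfolding eqA_def eqB_def by simp_all
    ultimately show ?thesis
      using finite_configurations by (simp add: Int_def)
  qed
  have "int (card Con) = (\<Sum>C\<in>Con. \<Sum>t<length eqs. eqB eqs t C - eqA eqs t C)"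
    using unit by simp
  also have "\<dots> = (\<Sum>t<length eqs. (\<Sum>C\<in>Con. eqB eqs t C) - (\<Sum>C\<in>Con. eqA eqs t C))"
    by (simp add: sum.swap[of _ Con] sum_subtractf)
  also have "\<dots> = 0" using balanced by simp
  moreover have "Con \<noteq> {}" using configurations_eq_image by auto
  ultimately show False using finite_configurations by simp
qed

end

theorem corollary3p2:
  fixes G (structure)
    and gs :: "'a list" and m :: nat and E :: "nat \<Rightarrow> 'a set"
    and eqs :: "(nat \<times> nat \<times> nat) list"
  assumes "group G"
    and "set gs \<subseteq> carrier G"
    and "is_partition G {..<m} E"
    and "\<forall>(i, j, k)\<in>set eqs. i < m \<and> j \<le> length gs \<and> k \<le> length gs"
    and "normal_system (length eqs) (configurations G gs m E) (eqA eqs) (eqB eqs)"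
    and "\<forall>C\<in>configurations G gs m E. (\<Sum>t<length eqs. eqB eqs t C - eqA eqs t C) = 1"
  shows "tarski_number G
           \<le> enat ((card (configurations G gs m E) - 1) * (2 ^ length eqs - 1))"
proof -
  interpret configuration_system G gs m E eqs
    using assms(1-4) by (simp add: configuration_system_def configuration_system_axioms_def
        partitioned_group_def partitioned_group_axioms_def)
  have "tarski_number G \<le> enat (2 * (2 ^ length eqs - 1))"
    using tarski_number_le_normal_system assms(5,6) .
  also have "\<dots> \<le> enat ((card Con - 1) * (2 ^ length eqs - 1))"
    using card_configurations_ge_3[OF assms(6)] by (intro enat_ord_simps(1)[THEN iffD2] mult_le_mono1) linarith
  finally show ?thesis .
qed

end
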